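(* Let $G$ be a finite simple graph, $\mathbb{K}$ a field, $R=\mathbb{K}[z:z\in V(G)]$, and $I_3(G)\subseteq R$ its $3$-path ideal. Let $e=\{x,y\}\in E(G)$. Then: (1) $I_3(G):xy=L+J$, where $L=\langle z : z\in N_G(e)\rangle$ and $J=I_3(G\setminus N_G[e])R$. (2) $(I_3(G)+\langle xy\rangle):x=\langle y\rangle+I_2(H)+I_3(G\setminus N_G[x])R$, where $H$ is the graph whose edge set is the union of $N_G^{\mathrm{edge}}(x)$ and the edge set of the complete graph on the vertex set $N_G(x)\setminus\{y\}$.
   Context: A $3$-path in $G$ is a sequence of three distinct vertices $a,b,c$ with $\{a,b\},\{b,c\}\in E(G)$; $I_3(G)=\langle abc : a,b,c \text{ a } 3\text{-path in } G\rangle$. For a subset $S\subseteq V(G)$, $G\setminus S$ denotes the induced subgraph of $G$ on $V(G)\setminus S$, and its $3$-path ideal is regarded inside $R$. $N_G(z)$ is the set of neighbors of $z$, $N_G[z]=N_G(z)\cup\{z\}$. For an edge $e=\{x,y\}$, $N_G(e)=(N_G(x)\setminus\{y\})\cup(N_G(y)\setminus\{x\})$ and $N_G[e]=N_G[x]\cup N_G[y]$. For a vertex $x$, $N_G^{\mathrm{edge}}(x)=\{\{a,b\}\in E(G) : x,a,b \text{ is a } 3\text{-path in } G\}$. For a graph $H$, $I_2(H)$ is its edge ideal, generated by $ab$ for $\{a,b\}\in E(H)$. *)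

theory Defs
  imports "HOL-Library.Poly_Mapping"
begin

text \<open>Polynomial ring K[z : z in V] with V = UNIV of a finite type 'v:
  polynomials are finitely supported maps from monomials (exponent vectors) to coefficients.\<close>
type_synonym ('v, 'k) mpoly = "('v \<Rightarrow>\<^sub>0 nat) \<Rightarrow>\<^sub>0 'k"

definition Var :: "'v \<Rightarrow> ('v, 'k::comm_ring_1) mpoly" where
  "Var z = Poly_Mapping.single (Poly_Mapping.single z 1) 1"

definition ideal_gen :: "'a::comm_ring_1 set \<Rightarrow> 'a set" where
  "ideal_gen S = {\<Sum>s\<in>F. c s * s | F c. finite F \<and> F \<subseteq> S}"

definition ideal_sum :: "'a::comm_ring_1 set \<Rightarrow> 'a set \<Rightarrow> 'a set" where
  "ideal_sum I J = {a + b | a b. a \<in> I \<and> b \<in> J}"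

definition colon :: "'a::comm_ring_1 set \<Rightarrow> 'a \<Rightarrow> 'a set" where
  "colon I f = {g. g * f \<in> I}"

text \<open>Simple graphs on vertex set UNIV :: 'v set, given by their edge set.\<close>
definition simple_graph :: "'v set set \<Rightarrow> bool" where
  "simple_graph E \<longleftrightarrow> (\<forall>e\<in>E. card e = 2)"

text \<open>Edge set of the induced subgraph G \ S.\<close>
definition del_verts :: "'v set set \<Rightarrow> 'v set \<Rightarrow> 'v set set" where
  "del_verts E S = {e \<in> E. e \<inter> S = {}}"

definition is_3path :: "'v set set \<Rightarrow> 'v \<Rightarrow> 'v \<Rightarrow> 'v \<Rightarrow> bool" where
  "is_3path E a b c \<longleftrightarrow> a \<noteq> b \<and> b \<noteq> c \<and> a \<noteq> c \<and> {a, b} \<in> E \<and> {b, c} \<in> E"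

definition I3 :: "'v set set \<Rightarrow> ('v, 'k::comm_ring_1) mpoly set" where
  "I3 E = ideal_gen {Var a * Var b * Var c | a b c. is_3path E a b c}"

definition I2 :: "'v set set \<Rightarrow> ('v, 'k::comm_ring_1) mpoly set" where
  "I2 E = ideal_gen {Var a * Var b | a b. {a, b} \<in> E}"

definition nbhd :: "'v set set \<Rightarrow> 'v \<Rightarrow> 'v set" where
  "nbhd E z = {w. {z, w} \<in> E}"

definition cnbhd :: "'v set set \<Rightarrow> 'v \<Rightarrow> 'v set" where
  "cnbhd E z = insert z (nbhd E z)"

definition edge_nbhd :: "'v set set \<Rightarrow> 'v \<Rightarrow> 'v \<Rightarrow> 'v set" where
  "edge_nbhd E x y = (nbhd E x - {y}) \<union> (nbhd E y - {x})"

definition edge_cnbhd :: "'v set set \<Rightarrow> 'v \<Rightarrow> 'v \<Rightarrow> 'v set" where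
  "edge_cnbhd E x y = cnbhd E x \<union> cnbhd E y"

definition nbhd_edge :: "'v set set \<Rightarrow> 'v \<Rightarrow> 'v set set" where
  "nbhd_edge E x = {{a, b} | a b. {a, b} \<in> E \<and> is_3path E x a b}"

definition complete_edges :: "'v set \<Rightarrow> 'v set set" where
  "complete_edges W = {{a, b} | a b. a \<in> W \<and> b \<in> W \<and> a \<noteq> b}"

end

theory Submission
  imports Defs
begin

text \<open>All ideals in the statement are generated by squarefree monomials, that is, by vertex sets.
  A polynomial lies in an ideal generated by monomials iff every monomial of its support is
  divisible by a generator. Hence a sum of such ideals is generated by the union of the generating
  sets, the colon by a squarefree monomial \<open>X\<close> is generated by the sets \<open>A - X\<close>, and two such
  ideals coincide as soon as every generator of each contains a generator of the other. Both
  identities thus reduce to comparing, for 3-paths \<open>P\<close>, the sets \<open>P - {x, y}\<close> resp. \<open>P - {x}\<close>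
  with the proposed generators. The key graph fact for (1) is that a 3-path missing \<open>N(e)\<close> cannot
  touch \<open>x\<close> or \<open>y\<close> either: a path neighbour of \<open>x\<close> or \<open>y\<close> would lie in \<open>N(e) \<union> {x, y}\<close>, so the
  whole path would lie in \<open>{x, y}\<close>.\<close>

definition monom :: "('v \<Rightarrow>\<^sub>0 nat) \<Rightarrow> ('v, 'k::comm_ring_1) mpoly" where
  "monom m = Poly_Mapping.single m 1"

text \<open>Monomials are exponent vectors; \<open>lookup s \<le> lookup t\<close> says that \<open>s\<close> divides \<open>t\<close>.\<close>

definition monomial_ideal :: "('v \<Rightarrow>\<^sub>0 nat) set \<Rightarrow> ('v, 'k::comm_ring_1) mpoly set" where
  "monomial_ideal S =
     {p. \<forall>t\<in>Poly_Mapping.keys p. \<exists>s\<in>S. Poly_Mapping.lookup s \<le> Poly_Mapping.lookup t}"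

lemma poly_mapping_sum_single:
  "(\<Sum>t\<in>Poly_Mapping.keys p. Poly_Mapping.single t (Poly_Mapping.lookup p t)) = p"
  by (rule poly_mapping_eqI)
     (auto simp: lookup_sum lookup_single when_def in_keys_iff simp del: lookup_single_eq)

lemma keys_sum_single:
  "Poly_Mapping.keys (\<Sum>t\<in>T. Poly_Mapping.single t (f t)) \<subseteq> T"
  using keys_sum[of "\<lambda>t. Poly_Mapping.single t (f t)" T] by auto

lemma mult_monom:
  "g * monom m = (\<Sum>t\<in>Poly_Mapping.keys g. Poly_Mapping.single (t + m) (Poly_Mapping.lookup g t))"
  by (subst (1) poly_mapping_sum_single[symmetric]) (simp add: sum_distrib_right monom_def mult_single)

lemma lookup_mult_monom:
  "Poly_Mapping.lookup (g * monom m) (t + m) = Poly_Mapping.lookup g t"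
  by (auto simp: mult_monom lookup_sum lookup_single when_def in_keys_iff simp del: lookup_single_eq)

lemma keys_mult_monom:
  "Poly_Mapping.keys (g * monom m) = (\<lambda>t. t + m) ` Poly_Mapping.keys g"
proof
  show "Poly_Mapping.keys (g * monom m) \<subseteq> (\<lambda>t. t + m) ` Poly_Mapping.keys g"
    using keys_mult[of g "monom m"] by (auto simp: monom_def)
  show "(\<lambda>t. t + m) ` Poly_Mapping.keys g \<subseteq> Poly_Mapping.keys (g * monom m)"
    by (auto simp: in_keys_iff lookup_mult_monom)
qed

lemma ideal_gen_monom_subset:
  "ideal_gen (monom ` S) \<subseteq> (monomial_ideal S :: ('v, 'k::comm_ring_1) mpoly set)"
proof
  fix p :: "('v, 'k) mpoly" assume "p \<in> ideal_gen (monom ` S)"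
  then obtain F c where p: "p = (\<Sum>g\<in>F. c g * g)" and F: "F \<subseteq> monom ` S"
    unfolding ideal_gen_def by blast
  show "p \<in> monomial_ideal S" unfolding monomial_ideal_def
  proof (intro CollectI ballI)
    fix t assume "t \<in> Poly_Mapping.keys p"
    then obtain g where "g \<in> F" "t \<in> Poly_Mapping.keys (c g * g)"
      using keys_sum[of "\<lambda>g. c g * g" F] p by auto
    with F obtain s where "s \<in> S" "t \<in> (\<lambda>u. u + s) ` Poly_Mapping.keys (c g)"
      by (auto simp: keys_mult_monom)
    then show "\<exists>s\<in>S. Poly_Mapping.lookup s \<le> Poly_Mapping.lookup t"
      by (auto simp: le_fun_def lookup_add intro!: bexI[of _ s])
  qed
qed

lemma monomial_ideal_subset_ideal_gen:
  "(monomial_ideal S :: ('v, 'k::comm_ring_1) mpoly set) \<subseteq> ideal_gen (monom ` S)"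
proof
  fix p :: "('v, 'k) mpoly" assume "p \<in> monomial_ideal S"
  then have divisor_exists: "\<forall>t\<in>Poly_Mapping.keys p. \<exists>s. s \<in> S \<and> Poly_Mapping.lookup s \<le> Poly_Mapping.lookup t"
    unfolding monomial_ideal_def by blast
  obtain \<sigma> where \<sigma>: "\<And>t. t \<in> Poly_Mapping.keys p \<Longrightarrow>
      \<sigma> t \<in> S \<and> Poly_Mapping.lookup (\<sigma> t) \<le> Poly_Mapping.lookup t"
    using bchoice[OF divisor_exists] by blast
  let ?K = "Poly_Mapping.keys p"
  let ?q = "\<lambda>t. Poly_Mapping.single (t - \<sigma> t) (Poly_Mapping.lookup p t)"
  define \<mu> where "\<mu> t = (monom (\<sigma> t) :: ('v, 'k) mpoly)" for t
  define c where "c g = (\<Sum>t\<in>{t\<in>?K. \<mu> t = g}. ?q t)" for g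
  have quotient: "?q t * \<mu> t = Poly_Mapping.single t (Poly_Mapping.lookup p t)" if "t \<in> ?K" for t
  proof -
    have "t - \<sigma> t + \<sigma> t = t"
      using \<sigma>[OF that] by (intro poly_mapping_eqI) (simp add: lookup_add lookup_minus le_fun_def)
    then show ?thesis by (simp add: \<mu>_def monom_def mult_single)
  qed
  have "(\<Sum>g\<in>\<mu> ` ?K. c g * g) = (\<Sum>g\<in>\<mu> ` ?K. \<Sum>t\<in>{t\<in>?K. \<mu> t = g}. ?q t * \<mu> t)"
    unfolding c_def sum_distrib_right by (auto intro!: sum.cong)
  also have "\<dots> = (\<Sum>t\<in>?K. ?q t * \<mu> t)"
    by (rule sum.group) auto
  also have "\<dots> = p"
    by (simp add: quotient poly_mapping_sum_single cong: sum.cong)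
  finally have "p = (\<Sum>g\<in>\<mu> ` ?K. c g * g)" ..
  moreover have "finite (\<mu> ` ?K)" "\<mu> ` ?K \<subseteq> monom ` S"
    using \<sigma> by (auto simp: \<mu>_def)
  ultimately show "p \<in> ideal_gen (monom ` S)"
    unfolding ideal_gen_def by blast
qed

lemma ideal_gen_monom_image:
  "ideal_gen (monom ` S) = (monomial_ideal S :: ('v, 'k::comm_ring_1) mpoly set)"
  by (rule equalityI[OF ideal_gen_monom_subset monomial_ideal_subset_ideal_gen])

lemma ideal_sum_monomial_ideal:
  "ideal_sum (monomial_ideal A) (monomial_ideal B)
     = (monomial_ideal (A \<union> B) :: ('v, 'k::comm_ring_1) mpoly set)"
proof (intro equalityI subsetI)
  fix p :: "('v, 'k) mpoly" assume "p \<in> ideal_sum (monomial_ideal A) (monomial_ideal B)"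
  then obtain a b where "p = a + b" "a \<in> monomial_ideal A" "b \<in> monomial_ideal B"
    unfolding ideal_sum_def by blast
  with keys_add[of a b] show "p \<in> monomial_ideal (A \<union> B)"
    unfolding monomial_ideal_def by blast
next
  fix p :: "('v, 'k) mpoly" assume p: "p \<in> monomial_ideal (A \<union> B)"
  let ?restrict = "\<lambda>T. \<Sum>t\<in>T. Poly_Mapping.single t (Poly_Mapping.lookup p t)"
  define U where "U = {t\<in>Poly_Mapping.keys p. \<not> (\<exists>s\<in>A. Poly_Mapping.lookup s \<le> Poly_Mapping.lookup t)}"
  have "?restrict (Poly_Mapping.keys p) = ?restrict (Poly_Mapping.keys p - U) + ?restrict U"
    by (rule sum.subset_diff) (auto simp: U_def)
  then have "p = ?restrict (Poly_Mapping.keys p - U) + ?restrict U"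
    by (simp only: poly_mapping_sum_single)
  moreover have "?restrict (Poly_Mapping.keys p - U) \<in> monomial_ideal A"
    using keys_sum_single[where T = "Poly_Mapping.keys p - U"]
    unfolding monomial_ideal_def U_def by blast
  moreover have "?restrict U \<in> monomial_ideal B"
    using keys_sum_single[where T = U] p
    unfolding monomial_ideal_def U_def by blast
  ultimately show "p \<in> ideal_sum (monomial_ideal A) (monomial_ideal B)"
    unfolding ideal_sum_def by blast
qed

text \<open>The truncated difference \<open>s - m\<close> is the exponent vector of \<open>lcm(s, m) / m\<close>.\<close>

lemma colon_monomial_ideal:
  "colon (monomial_ideal S) (monom m) = monomial_ideal ((\<lambda>s. s - m) ` S)"
proof -
  have "Poly_Mapping.lookup s \<le> Poly_Mapping.lookup (t + m) \<longleftrightarrow>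
        Poly_Mapping.lookup (s - m) \<le> Poly_Mapping.lookup t" for s t :: "'a \<Rightarrow>\<^sub>0 nat"
    by (simp add: le_fun_def lookup_add lookup_minus le_diff_conv)
  then show ?thesis
    unfolding colon_def monomial_ideal_def by (auto simp: keys_mult_monom)
qed

lemma monomial_ideal_mono:
  assumes "\<And>a. a \<in> A \<Longrightarrow> \<exists>b\<in>B. Poly_Mapping.lookup b \<le> Poly_Mapping.lookup a"
  shows "monomial_ideal A \<subseteq> monomial_ideal B"
  using assms unfolding monomial_ideal_def by (blast intro: order_trans)

lemma monomial_ideal_eqI:
  assumes "\<And>a. a \<in> A \<Longrightarrow> \<exists>b\<in>B. Poly_Mapping.lookup b \<le> Poly_Mapping.lookup a"
    and "\<And>b. b \<in> B \<Longrightarrow> \<exists>a\<in>A. Poly_Mapping.lookup a \<le> Poly_Mapping.lookup b"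
  shows "monomial_ideal A = monomial_ideal B"
  using assms by (intro subset_antisym monomial_ideal_mono) auto

text \<open>Junk value \<open>0\<close> for infinite \<open>A\<close>.\<close>

definition sqfree :: "'v set \<Rightarrow> ('v \<Rightarrow>\<^sub>0 nat)" where
  "sqfree A = (\<Sum>a\<in>A. Poly_Mapping.single a 1)"

lemma lookup_sqfree: "finite A \<Longrightarrow> Poly_Mapping.lookup (sqfree A) v = (if v \<in> A then 1 else 0)"
  by (simp add: sqfree_def lookup_sum lookup_single when_def)

lemma sqfree_le_iff:
  "finite A \<Longrightarrow> finite B \<Longrightarrow> Poly_Mapping.lookup (sqfree A) \<le> Poly_Mapping.lookup (sqfree B) \<longleftrightarrow> A \<subseteq> B"
  by (auto simp: le_fun_def lookup_sqfree split: if_splits)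

lemma sqfree_diff: "finite A \<Longrightarrow> finite B \<Longrightarrow> sqfree A - sqfree B = sqfree (A - B)"
  by (intro poly_mapping_eqI) (simp add: lookup_minus lookup_sqfree)

lemma Var_eq_monom_sqfree: "Var a = monom (sqfree {a})"
  by (simp add: Var_def monom_def sqfree_def)

lemma Var_mult_Var: "a \<noteq> b \<Longrightarrow> Var a * Var b = monom (sqfree {a, b})"
  by (simp add: Var_def monom_def sqfree_def mult_single)

lemma Var_mult_Var_mult_Var:
  "a \<noteq> b \<Longrightarrow> b \<noteq> c \<Longrightarrow> a \<noteq> c \<Longrightarrow> Var a * Var b * Var c = monom (sqfree {a, b, c})"
  by (simp add: Var_def monom_def sqfree_def mult_single add.assoc)

definition sqfree_ideal :: "'v set set \<Rightarrow> ('v, 'k::comm_ring_1) mpoly set" where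
  "sqfree_ideal \<A> = monomial_ideal (sqfree ` \<A>)"

lemma ideal_gen_monom_sqfree: "ideal_gen ((\<lambda>A. monom (sqfree A)) ` \<A>) = sqfree_ideal \<A>"
  by (simp add: sqfree_ideal_def ideal_gen_monom_image flip: image_image)

lemma ideal_sum_sqfree_ideal: "ideal_sum (sqfree_ideal \<A>) (sqfree_ideal \<B>) = sqfree_ideal (\<A> \<union> \<B>)"
  by (simp add: sqfree_ideal_def ideal_sum_monomial_ideal image_Un)

lemma colon_sqfree_ideal:
  assumes "\<forall>A\<in>\<A>. finite A" and "finite X"
  shows "colon (sqfree_ideal \<A>) (monom (sqfree X)) = sqfree_ideal ((\<lambda>A. A - X) ` \<A>)"
proof -
  have "(\<lambda>s. s - sqfree X) ` sqfree ` \<A> = sqfree ` (\<lambda>A. A - X) ` \<A>"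
    using assms by (auto simp: image_image sqfree_diff intro!: image_cong)
  then show ?thesis
    by (simp add: sqfree_ideal_def colon_monomial_ideal)
qed

lemma sqfree_ideal_eqI:
  assumes "\<forall>A\<in>\<A>. finite A" and "\<forall>B\<in>\<B>. finite B"
    and "\<And>A. A \<in> \<A> \<Longrightarrow> \<exists>B\<in>\<B>. B \<subseteq> A" and "\<And>B. B \<in> \<B> \<Longrightarrow> \<exists>A\<in>\<A>. A \<subseteq> B"
  shows "sqfree_ideal \<A> = sqfree_ideal \<B>"
  unfolding sqfree_ideal_def
  by (rule monomial_ideal_eqI) (use assms in \<open>auto simp: sqfree_le_iff\<close>)

lemma simple_graph_edge_neq: "simple_graph E \<Longrightarrow> {a, b} \<in> E \<Longrightarrow> a \<noteq> b"
  by (force simp: simple_graph_def)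

definition path3_sets :: "'v set set \<Rightarrow> 'v set set" where
  "path3_sets E = {{a, b, c} | a b c. is_3path E a b c}"

lemma path3_setsI: "is_3path E a b c \<Longrightarrow> {a, b, c} \<in> path3_sets E"
  by (auto simp: path3_sets_def)

lemma finite_path3_sets: "P \<in> path3_sets E \<Longrightarrow> finite P"
  by (auto simp: path3_sets_def)

lemma is_3path_del_verts:
  "is_3path (del_verts E S) a b c \<longleftrightarrow> is_3path E a b c \<and> {a, b, c} \<inter> S = {}"
  by (auto simp: is_3path_def del_verts_def)

lemma I3_eq_sqfree_ideal: "I3 E = sqfree_ideal (path3_sets E)"
proof -
  have monom_path: "Var a * Var b * Var c = monom (sqfree {a, b, c})" if "is_3path E a b c" for a b c
    using that by (simp add: is_3path_def Var_mult_Var_mult_Var)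
  have generators: "{Var a * Var b * Var c | a b c. is_3path E a b c} = (\<lambda>A. monom (sqfree A)) ` path3_sets E"
  proof (intro equalityI subsetI)
    fix q assume "q \<in> {Var a * Var b * Var c | a b c. is_3path E a b c}"
    then obtain a b c where "q = Var a * Var b * Var c" "is_3path E a b c" by blast
    then show "q \<in> (\<lambda>A. monom (sqfree A)) ` path3_sets E"
      unfolding path3_sets_def by (auto simp: monom_path)
  next
    fix q assume "q \<in> (\<lambda>A. monom (sqfree A)) ` path3_sets E"
    then obtain a b c where "q = monom (sqfree {a, b, c})" "is_3path E a b c"
      unfolding path3_sets_def by blast
    then show "q \<in> {Var a * Var b * Var c | a b c. is_3path E a b c}"
      using monom_path[symmetric] by blast
  qed
  show ?thesis
    unfolding I3_def generators by (rule ideal_gen_monom_sqfree)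
qed

lemma I2_eq_sqfree_ideal:
  assumes "simple_graph E"
  shows "I2 E = sqfree_ideal E"
proof -
  have monom_edge: "Var a * Var b = monom (sqfree {a, b})" if "{a, b} \<in> E" for a b
    using that assms by (simp add: Var_mult_Var simple_graph_edge_neq)
  have generators: "{Var a * Var b | a b. {a, b} \<in> E} = (\<lambda>A. monom (sqfree A)) ` E"
  proof (intro equalityI subsetI)
    fix q assume "q \<in> {Var a * Var b | a b. {a, b} \<in> E}"
    then obtain a b where "q = Var a * Var b" "{a, b} \<in> E" by blast
    then show "q \<in> (\<lambda>A. monom (sqfree A)) ` E"
      by (auto simp: monom_edge)
  next
    fix q assume "q \<in> (\<lambda>A. monom (sqfree A)) ` E"
    moreover have "\<exists>a b. e = {a, b}" if "e \<in> E" for e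
      using that assms unfolding simple_graph_def card_2_iff by blast
    ultimately obtain a b where "q = monom (sqfree {a, b})" "{a, b} \<in> E"
      by blast
    then show "q \<in> {Var a * Var b | a b. {a, b} \<in> E}"
      using monom_edge[symmetric] by blast
  qed
  show ?thesis
    unfolding I2_def generators by (rule ideal_gen_monom_sqfree)
qed

lemma ideal_gen_Var_image: "ideal_gen (Var ` W) = sqfree_ideal ((\<lambda>z. {z}) ` W)"
proof -
  have generators: "Var ` W = (\<lambda>A. monom (sqfree A)) ` (\<lambda>z. {z}) ` W"
    by (auto simp: Var_eq_monom_sqfree)
  show ?thesis
    unfolding generators by (rule ideal_gen_monom_sqfree)
qed

lemma ideal_gen_Var: "ideal_gen {Var y} = sqfree_ideal {{y}}"
  using ideal_gen_Var_image[of "{y}"] by simp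

lemma ideal_gen_Var_mult_Var: "x \<noteq> y \<Longrightarrow> ideal_gen {Var x * Var y} = sqfree_ideal {{x, y}}"
  using ideal_gen_monom_sqfree[of "{{x, y}}"] by (simp add: Var_mult_Var)

lemma edge_cnbhd_eq: "edge_cnbhd E x y = insert x (insert y (edge_nbhd E x y))"
  by (auto simp: edge_cnbhd_def cnbhd_def edge_nbhd_def)

lemma edge_nbhd_excludes_ends:
  assumes "simple_graph E"
  shows "x \<notin> edge_nbhd E x y" and "y \<notin> edge_nbhd E x y"
  using simple_graph_edge_neq[OF assms, of x x] simple_graph_edge_neq[OF assms, of y y]
  by (auto simp: edge_nbhd_def nbhd_def)

lemma path3_disjoint_edge_nbhd:
  assumes "simple_graph E" "{x, y} \<in> E" "is_3path E a b c" "{a, b, c} \<inter> edge_nbhd E x y = {}"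
  shows "{a, b, c} \<inter> edge_cnbhd E x y = {}"
proof -
  have closed: "u \<in> {x, y}" if "v \<in> {x, y}" "{v, u} \<in> E" "u \<in> {a, b, c}" for u v
  proof -
    have "u \<in> nbhd E v" "u \<notin> edge_nbhd E x y"
      using that assms(4) by (auto simp: nbhd_def)
    then show ?thesis
      using that(1) unfolding edge_nbhd_def by blast
  qed
  have "{a, b, c} \<inter> {x, y} = {}"
  proof (rule ccontr)
    have "{a, b} \<in> E" "{b, a} \<in> E" "{b, c} \<in> E" "{c, b} \<in> E"
      using assms(3) by (auto simp: is_3path_def insert_commute)
    moreover assume "{a, b, c} \<inter> {x, y} \<noteq> {}"
    ultimately have "a \<in> {x, y}" "b \<in> {x, y}" "c \<in> {x, y}"
      using closed by blast+
    then show False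
      using assms(3) by (auto simp: is_3path_def)
  qed
  then show ?thesis
    using assms(4) unfolding edge_cnbhd_eq by blast
qed

lemma path3_diff_edge_contains_gen:
  assumes "simple_graph E" "{x, y} \<in> E" "is_3path E a b c"
  shows "\<exists>B\<in>(\<lambda>z. {z}) ` edge_nbhd E x y \<union> path3_sets (del_verts E (edge_cnbhd E x y)).
           B \<subseteq> {a, b, c} - {x, y}"
proof (cases "{a, b, c} \<inter> edge_nbhd E x y = {}")
  case True
  then have "{a, b, c} \<inter> edge_cnbhd E x y = {}"
    by (rule path3_disjoint_edge_nbhd[OF assms])
  then have "{a, b, c} \<in> path3_sets (del_verts E (edge_cnbhd E x y))" "{a, b, c} - {x, y} = {a, b, c}"
    using assms(3) by (auto simp: is_3path_del_verts edge_cnbhd_eq intro: path3_setsI)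
  then show ?thesis by blast
next
  case False
  then obtain z where z: "z \<in> edge_nbhd E x y" "z \<in> {a, b, c}" by blast
  then have "{z} \<subseteq> {a, b, c} - {x, y}"
    using edge_nbhd_excludes_ends[OF assms(1)] by auto
  with z(1) show ?thesis by blast
qed

lemma gen_contains_path3_diff_edge:
  assumes "simple_graph E" "{x, y} \<in> E"
    and "B \<in> (\<lambda>z. {z}) ` edge_nbhd E x y \<union> path3_sets (del_verts E (edge_cnbhd E x y))"
  shows "\<exists>P\<in>path3_sets E. P - {x, y} \<subseteq> B"
proof -
  from assms(3) consider (x_side) z where "B = {z}" "{x, z} \<in> E" "z \<noteq> y"
    | (y_side) z where "B = {z}" "{y, z} \<in> E" "z \<noteq> x"
    | (path) a b c where "B = {a, b, c}" "is_3path (del_verts E (edge_cnbhd E x y)) a b c"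
    by (auto simp: edge_nbhd_def nbhd_def path3_sets_def)
  then show ?thesis
  proof cases
    case x_side
    moreover have "{y, x} \<in> E"
      using assms(2) by (simp add: insert_commute)
    ultimately have "is_3path E y x z"
      using simple_graph_edge_neq[OF assms(1)] unfolding is_3path_def by blast
    moreover have "{y, x, z} - {x, y} = B"
      using x_side simple_graph_edge_neq[OF assms(1), of x z] by auto
    ultimately show ?thesis
      by (metis path3_setsI subset_refl)
  next
    case y_side
    then have "is_3path E x y z"
      using assms simple_graph_edge_neq[OF assms(1)] unfolding is_3path_def by blast
    moreover have "{x, y, z} - {x, y} = B"
      using y_side simple_graph_edge_neq[OF assms(1), of y z] by auto
    ultimately show ?thesis
      by (metis path3_setsI subset_refl)
  next
    case path
    then have "is_3path E a b c" "{a, b, c} - {x, y} = B"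
      by (auto simp: is_3path_del_verts edge_cnbhd_eq)
    then show ?thesis
      by (metis path3_setsI subset_refl)
  qed
qed

lemma colon_I3_edge:
  assumes "simple_graph E" and "{x, y} \<in> E"
  shows "colon (I3 E :: ('v, 'k::comm_ring_1) mpoly set) (Var x * Var y)
           = ideal_sum (ideal_gen (Var ` edge_nbhd E x y)) (I3 (del_verts E (edge_cnbhd E x y)))"
proof -
  let ?N = "edge_nbhd E x y" and ?E' = "del_verts E (edge_cnbhd E x y)"
  have "x \<noteq> y"
    using assms by (rule simple_graph_edge_neq)
  have "colon (I3 E :: ('v, 'k) mpoly set) (Var x * Var y)
      = colon (sqfree_ideal (path3_sets E)) (monom (sqfree {x, y}))"
    by (simp only: I3_eq_sqfree_ideal Var_mult_Var[OF \<open>x \<noteq> y\<close>])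
  also have "\<dots> = sqfree_ideal ((\<lambda>P. P - {x, y}) ` path3_sets E)"
    by (rule colon_sqfree_ideal) (auto simp: finite_path3_sets)
  also have "\<dots> = sqfree_ideal ((\<lambda>z. {z}) ` ?N \<union> path3_sets ?E')"
  proof (rule sqfree_ideal_eqI)
    fix A assume "A \<in> (\<lambda>P. P - {x, y}) ` path3_sets E"
    then obtain a b c where "A = {a, b, c} - {x, y}" "is_3path E a b c"
      by (auto simp: path3_sets_def)
    then show "\<exists>B\<in>(\<lambda>z. {z}) ` ?N \<union> path3_sets ?E'. B \<subseteq> A"
      using path3_diff_edge_contains_gen[OF assms] by simp
  next
    fix B assume "B \<in> (\<lambda>z. {z}) ` ?N \<union> path3_sets ?E'"
    then obtain P where "P \<in> path3_sets E" "P - {x, y} \<subseteq> B"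
      using gen_contains_path3_diff_edge[OF assms] by blast
    then show "\<exists>A\<in>(\<lambda>P. P - {x, y}) ` path3_sets E. A \<subseteq> B"
      by blast
  qed (auto simp: finite_path3_sets)
  also have "\<dots> = ideal_sum (ideal_gen (Var ` ?N)) (I3 ?E')"
    by (simp add: ideal_gen_Var_image I3_eq_sqfree_ideal ideal_sum_sqfree_ideal)
  finally show ?thesis .
qed

lemma nbhd_edge_or_complete_edge:
  assumes "simple_graph E" "{u, w} \<in> E" "u \<in> nbhd E x" "x \<notin> {u, w}" "y \<notin> {u, w}"
  shows "{u, w} \<in> nbhd_edge E x \<union> complete_edges (nbhd E x - {y})"
proof (cases "w \<in> nbhd E x")
  case True
  then show ?thesis
    unfolding complete_edges_def using assms simple_graph_edge_neq[OF assms(1,2)] by blast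
next
  case False
  then have "is_3path E x u w"
    unfolding is_3path_def using assms simple_graph_edge_neq[OF assms(1,2)] by (simp add: nbhd_def)
  then show ?thesis
    using assms(2) by (auto simp: nbhd_edge_def)
qed

lemma simple_graph_nbhd_edge_Un_complete_edges:
  "simple_graph (nbhd_edge E x \<union> complete_edges W)"
  by (auto simp: simple_graph_def nbhd_edge_def complete_edges_def is_3path_def)

text \<open>Either \<open>x\<close> is the middle vertex, or some path edge avoiding \<open>x\<close> has an end in \<open>N(x)\<close>
  and so is an edge of \<open>H\<close>, or the path avoids \<open>N[x]\<close>.\<close>

lemma path3_diff_vertex_contains_gen:
  assumes "simple_graph E" "is_3path E a b c" "y \<notin> {a, b, c}"
  shows "\<exists>B\<in>nbhd_edge E x \<union> complete_edges (nbhd E x - {y}) \<union> path3_sets (del_verts E (cnbhd E x)).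
           B \<subseteq> {a, b, c} - {x}"
proof -
  let ?H = "nbhd_edge E x \<union> complete_edges (nbhd E x - {y})"
  let ?\<B> = "?H \<union> path3_sets (del_verts E (cnbhd E x))"
  have edges: "{a, b} \<in> E" "{b, a} \<in> E" "{b, c} \<in> E" "{c, b} \<in> E"
    using assms(2) by (auto simp: is_3path_def insert_commute)
  have via_edge: "\<exists>B\<in>?\<B>. B \<subseteq> {a, b, c} - {x}"
    if "{u, w} \<in> E" "{u, w} \<subseteq> {a, b, c}" "u \<in> nbhd E x" "x \<notin> {u, w}" for u w
  proof -
    have "{u, w} \<in> ?H"
      using nbhd_edge_or_complete_edge[OF assms(1) that(1,3,4)] that(2) assms(3) by blast
    moreover have "{u, w} \<subseteq> {a, b, c} - {x}"
      using that(2,4) by blast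
    ultimately show ?thesis by blast
  qed
  show ?thesis
  proof (cases "b = x")
    case True
    then have "{a, c} \<in> complete_edges (nbhd E x - {y})"
      using edges assms(2,3) unfolding complete_edges_def is_3path_def nbhd_def by blast
    moreover have "{a, b, c} - {x} = {a, c}"
      using True assms(2) by (auto simp: is_3path_def)
    ultimately show ?thesis by blast
  next
    case False
    have "(a \<in> nbhd E x \<and> x \<notin> {a, b}) \<or> (b \<in> nbhd E x \<and> x \<notin> {a, b})
        \<or> (b \<in> nbhd E x \<and> x \<notin> {b, c}) \<or> (c \<in> nbhd E x \<and> x \<notin> {b, c})
        \<or> {a, b, c} \<inter> cnbhd E x = {}"
      using False edges assms(2) by (auto simp: is_3path_def cnbhd_def nbhd_def)
    then show ?thesis
    proof (elim disjE)
      assume "{a, b, c} \<inter> cnbhd E x = {}"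
      then have "{a, b, c} \<in> path3_sets (del_verts E (cnbhd E x))" "{a, b, c} - {x} = {a, b, c}"
        using assms(2) by (auto simp: is_3path_del_verts cnbhd_def intro: path3_setsI)
      then show ?thesis by (metis UnI2 subset_refl)
    qed (use via_edge edges in auto)
  qed
qed

lemma gen_contains_path3_diff_vertex:
  assumes "simple_graph E" "x \<noteq> y"
    and "B \<in> {{y}} \<union> (nbhd_edge E x \<union> complete_edges (nbhd E x - {y}))
              \<union> path3_sets (del_verts E (cnbhd E x))"
  shows "\<exists>P\<in>path3_sets E \<union> {{x, y}}. P - {x} \<subseteq> B"
proof -
  have cover: "\<exists>P\<in>path3_sets E \<union> {{x, y}}. P - {x} \<subseteq> B"
    if "P \<in> path3_sets E \<union> {{x, y}}" "P - {x} = B" for P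
    using that by blast
  from assms(3) consider (vertex) "B = {y}"
    | (nbhd_edge) a b where "B = {a, b}" "is_3path E x a b"
    | (complete) a b where "B = {a, b}" "{x, a} \<in> E" "{x, b} \<in> E" "a \<noteq> b"
    | (path) a b c where "B = {a, b, c}" "is_3path (del_verts E (cnbhd E x)) a b c"
    by (auto simp: nbhd_edge_def complete_edges_def nbhd_def path3_sets_def)
  then show ?thesis
  proof cases
    case vertex
    then show ?thesis
      using assms(2) by (intro cover[of "{x, y}"]) auto
  next
    case nbhd_edge
    then show ?thesis
      by (intro cover[of "{x, a, b}"]) (auto simp: is_3path_def intro: path3_setsI)
  next
    case complete
    then have "is_3path E a x b"
      using simple_graph_edge_neq[OF assms(1)] by (auto simp: is_3path_def insert_commute)
    then show ?thesis
      using complete simple_graph_edge_neq[OF assms(1)]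
      by (intro cover[of "{a, x, b}"]) (auto intro: path3_setsI)
  next
    case path
    then show ?thesis
      by (intro cover[of "{a, b, c}"]) (auto simp: is_3path_del_verts cnbhd_def intro: path3_setsI)
  qed
qed

lemma colon_I3_plus_edge_Var:
  assumes "simple_graph E" and "{x, y} \<in> E"
  shows "colon (ideal_sum (I3 E :: ('v, 'k::comm_ring_1) mpoly set) (ideal_gen {Var x * Var y})) (Var x)
           = ideal_sum (ideal_sum (ideal_gen {Var y})
                                  (I2 (nbhd_edge E x \<union> complete_edges (nbhd E x - {y}))))
                       (I3 (del_verts E (cnbhd E x)))"
proof -
  let ?H = "nbhd_edge E x \<union> complete_edges (nbhd E x - {y})" and ?E' = "del_verts E (cnbhd E x)"
  let ?\<A> = "path3_sets E \<union> {{x, y}}"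
  have "x \<noteq> y"
    using assms by (rule simple_graph_edge_neq)
  have "colon (ideal_sum (I3 E) (ideal_gen {Var x * Var y})) (Var x)
      = colon (sqfree_ideal ?\<A> :: ('v, 'k) mpoly set) (monom (sqfree {x}))"
    unfolding I3_eq_sqfree_ideal ideal_gen_Var_mult_Var[OF \<open>x \<noteq> y\<close>] ideal_sum_sqfree_ideal
    by (simp only: Var_eq_monom_sqfree)
  also have "\<dots> = sqfree_ideal ((\<lambda>P. P - {x}) ` ?\<A>)"
    by (rule colon_sqfree_ideal) (auto simp: finite_path3_sets)
  also have "\<dots> = sqfree_ideal ({{y}} \<union> ?H \<union> path3_sets ?E')"
  proof (rule sqfree_ideal_eqI)
    fix A assume "A \<in> (\<lambda>P. P - {x}) ` ?\<A>"
    then consider (contains_y) "y \<in> A"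
      | (avoids_y) a b c where "A = {a, b, c} - {x}" "is_3path E a b c" "y \<notin> {a, b, c}"
      using \<open>x \<noteq> y\<close> by (auto simp: path3_sets_def)
    then show "\<exists>B\<in>{{y}} \<union> ?H \<union> path3_sets ?E'. B \<subseteq> A"
    proof cases
      case contains_y
      then show ?thesis by (intro bexI[of _ "{y}"]) auto
    next
      case avoids_y
      show ?thesis
        using path3_diff_vertex_contains_gen[OF assms(1) avoids_y(2,3), of x] avoids_y(1) by blast
    qed
  next
    fix B assume "B \<in> {{y}} \<union> ?H \<union> path3_sets ?E'"
    then obtain P where "P \<in> ?\<A>" "P - {x} \<subseteq> B"
      using gen_contains_path3_diff_vertex[OF assms(1) \<open>x \<noteq> y\<close>] by blast
    then show "\<exists>A\<in>(\<lambda>P. P - {x}) ` ?\<A>. A \<subseteq> B"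
      by blast
  qed (auto simp: finite_path3_sets nbhd_edge_def complete_edges_def)
  also have "\<dots> = ideal_sum (ideal_sum (ideal_gen {Var y}) (I2 ?H)) (I3 ?E')"
    by (simp only: ideal_gen_Var I2_eq_sqfree_ideal[OF simple_graph_nbhd_edge_Un_complete_edges]
        I3_eq_sqfree_ideal ideal_sum_sqfree_ideal)
  finally show ?thesis .
qed

theorem lemma4p1:
  fixes E :: "('v::finite) set set" and x y :: 'v
  assumes "simple_graph E" and "{x, y} \<in> E"
  shows "colon (I3 E :: ('v, 'k::field) mpoly set) (Var x * Var y)
           = ideal_sum (ideal_gen (Var ` edge_nbhd E x y))
                       (I3 (del_verts E (edge_cnbhd E x y)))
       \<and> colon (ideal_sum (I3 E :: ('v, 'k::field) mpoly set) (ideal_gen {Var x * Var y})) (Var x)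
           = ideal_sum (ideal_sum (ideal_gen {Var y})
                                  (I2 (nbhd_edge E x \<union> complete_edges (nbhd E x - {y}))))
                       (I3 (del_verts E (cnbhd E x)))"
  using colon_I3_edge[OF assms] colon_I3_plus_edge_Var[OF assms] by blast

end
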